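(* Let $d\ge1$, $T<\infty$, $\phi\in C_c^\infty([0,T]\times\mathbb R^{2d})$. For $\Lambda\in\mathbb N$ let $\psi_2^\Lambda:\mathbb R^d\to[0,1]$ be $C_c^\infty$, identically $1$ on the Euclidean ball $B(0,\Lambda)$ and identically $0$ outside $B(0,2\Lambda)$. Then for the $N$-particle system in the context, $$\lim_{\Lambda\to\infty}\sup_{N\in\mathbb N}\mathbb E\int_0^T\frac1{N^2}\sum_{i\in\mathcal N(t)}\sum_{j\in\mathcal N(t),j\ne i}\theta^\varepsilon(x_i^N(t)-x_j^N(t))\big|\phi(t,x_i^N(t),v_i^N(t))\,[1-\psi_2^\Lambda(v_j^N(t))]\big|dt=0.$$
   Context: Fix $d\ge1$. Let $f_0:\mathbb R^{2d}\to[0,\infty)$ be a probability density with $\|f_0\|_{L^\infty}\le\Gamma<\infty$ and support contained in the closed Euclidean ball of radius $R<\infty$ centred at the origin. Let $\theta:\mathbb R^d\to[0,\infty)$ be $C^\infty$ with $\int\theta=1$, $\theta(0)=0$, $\theta(x)=\theta(-x)$, support in the closed unit ball; $\theta^\varepsilon(x)=\varepsilon^{-d}\theta(\varepsilon^{-1}x)$, $\varepsilon=\varepsilon(N)\in(0,1]$, $\varepsilon(N)\to0$, $\limsup_N\varepsilon^{-d}/N\le1$. Let $(B_i)_{i\ge1}$ be independent standard Brownian motions in $\mathbb R^d$ and $(x_i(0),v_i(0))_{i\ge1}$ i.i.d. with density $f_0$, independent of the $B_i$. The $N$-particle system starts with active particles $1,\dots,N$; while active, $x_i^N(t)=x_i(0)+\int_0^tv_i^N(s)ds$,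 $v_i^N(t)=v_i(0)+B_i(t)$; the configuration of active particles is Markov with generator $\mathcal L_NF(\zeta)=\sum_{i}[v_i\cdot\nabla_{x_i}F+\frac12\Delta_{v_i}F](\zeta)+\sum_i\sum_{j\ne i}\frac1N\theta^\varepsilon(x_i-x_j)[F(\zeta^{-ij})-F(\zeta)]$ (sums over active indices; $\zeta^{-ij}$ removes particles $i,j$ permanently). $\mathcal N(t)$ is the set of active indices at time $t$. *)

theory Defs
  imports "HOL-Analysis.Analysis" "HOL-Probability.Probability"
begin

coinductive C_inf :: "('a::real_normed_vector \<Rightarrow> 'b::real_normed_vector) \<Rightarrow> bool" where
  "continuous_on UNIV f \<Longrightarrow> (\<forall>x. (f has_derivative f' x) (at x))
     \<Longrightarrow> (\<forall>u. C_inf (\<lambda>x. f' x u)) \<Longrightarrow> C_inf f"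

definition C_c_inf :: "('a::real_normed_vector \<Rightarrow> 'b::real_normed_vector) \<Rightarrow> bool" where
  "C_c_inf f \<longleftrightarrow> C_inf f \<and> compact (closure {x. f x \<noteq> 0})"

definition mollif :: "real \<Rightarrow> (real^'d \<Rightarrow> real) \<Rightarrow> real^'d \<Rightarrow> real" where
  "mollif e \<theta> x = \<theta> ((1 / e) *\<^sub>R x) / e ^ CARD('d)"

definition gauss_density :: "real \<Rightarrow> real^'d \<Rightarrow> real" where
  "gauss_density s x = (2 * pi * s) powr (- real CARD('d) / 2) * exp (- (norm x)\<^sup>2 / (2 * s))"

definition std_BM :: "'a measure \<Rightarrow> (real \<Rightarrow> 'a \<Rightarrow> real^'d) \<Rightarrow> bool" where
  "std_BM M B \<longleftrightarrow>
     (\<forall>t. B t \<in> borel_measurable M) \<and>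
     (\<forall>\<omega>\<in>space M. B 0 \<omega> = 0 \<and> continuous_on {0..} (\<lambda>t. B t \<omega>)) \<and>
     (\<forall>s t. 0 \<le> s \<and> s < t \<longrightarrow>
        distributed M lborel (\<lambda>\<omega>. B t \<omega> - B s \<omega>) (\<lambda>x. ennreal (gauss_density (t - s) x))) \<and>
     (\<forall>ts::real list. sorted ts \<and> (\<forall>t\<in>set ts. 0 \<le> t) \<longrightarrow>
        prob_space.indep_vars M (\<lambda>_. borel) (\<lambda>k \<omega>. B (ts ! Suc k) \<omega> - B (ts ! k) \<omega>) {..<length ts - 1})"

definition vel :: "(nat \<Rightarrow> 'a \<Rightarrow> (real^'d) \<times> (real^'d)) \<Rightarrow> (nat \<Rightarrow> real \<Rightarrow> 'a \<Rightarrow> real^'d)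
    \<Rightarrow> nat \<Rightarrow> real \<Rightarrow> 'a \<Rightarrow> real^'d" where
  "vel X0 B i t \<omega> = snd (X0 i \<omega>) + B i t \<omega>"

definition pos :: "(nat \<Rightarrow> 'a \<Rightarrow> (real^'d) \<times> (real^'d)) \<Rightarrow> (nat \<Rightarrow> real \<Rightarrow> 'a \<Rightarrow> real^'d)
    \<Rightarrow> nat \<Rightarrow> real \<Rightarrow> 'a \<Rightarrow> real^'d" where
  "pos X0 B i t \<omega> = fst (X0 i \<omega>) + integral {0..t} (\<lambda>s. vel X0 B i s \<omega>)"

text \<open>Independence of two random variables with possibly different value spaces
  (same as the library's indep_var, which requires a common value type).\<close>
definition indep_rv :: "'a measure \<Rightarrow> 'b measure \<Rightarrow> ('a \<Rightarrow> 'b) \<Rightarrow> 'c measure \<Rightarrow> ('a \<Rightarrow> 'c) \<Rightarrow> bool" where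
  "indep_rv M MX X MY Y \<longleftrightarrow> X \<in> measurable M MX \<and> Y \<in> measurable M MY \<and>
     prob_space.indep_set M {X -` A \<inter> space M | A. A \<in> sets MX} {Y -` A \<inter> space M | A. A \<in> sets MY}"

end

theory Submission
  imports Defs
begin

text \<open>Since at most \<open>N\<close> particles are ever active, \<open>\<phi>\<close> is bounded by some \<open>K\<close> and
  \<open>1 - \<psi>\<^sub>\<Lambda>\<close> vanishes on \<open>B(0,\<Lambda>)\<close>, the integrand is dominated by \<open>K/N\<^sup>2\<close> times a sum over
  all ordered pairs of the \<open>N\<close> initial particles of \<open>\<theta>\<^sup>\<epsilon>(x\<^sub>i - x\<^sub>j) (1 - \<psi>\<^sub>\<Lambda>(v\<^sub>j))\<close>.
  For a pair \<open>i \<noteq> j\<close> the two particles are independent, so the kernel can first be integrated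
  against the initial position of particle \<open>i\<close>; as \<open>f\<^sub>0 \<le> \<Gamma>\<close> is supported in \<open>B(0,R)\<close> and
  \<open>\<theta>\<^sup>\<epsilon>\<close> has mass one, this costs at most \<open>\<Gamma> |B(0,R)|\<close>, whatever \<open>\<epsilon>\<close> is. What remains is
  \<open>P(|v\<^sub>j(t)| \<ge> \<Lambda>) \<le> P(|B\<^sub>t| \<ge> \<Lambda> - R)\<close>, so the expectation is at most
  \<open>K \<Gamma> |B(0,R)| \<integral>\<^sub>0\<^sup>T P(|B\<^sub>t| \<ge> \<Lambda> - R) dt\<close> for every \<open>N\<close>, and this tends to \<open>0\<close> by
  monotone convergence.\<close>

section \<open>Riemann sums, joint measurability and finite sums\<close>

lemma norm_left_endpoint_integral_le:
  fixes p :: "real \<Rightarrow> 'b::banach"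
  assumes ab: "a \<le> b" and cont: "continuous_on {a..b} p"
    and close: "\<And>s. s \<in> {a..b} \<Longrightarrow> norm (p s - p a) \<le> e"
  shows "norm ((b - a) *\<^sub>R p a - integral {a..b} p) \<le> e * (b - a)"
proof -
  have "integral {a..b} (\<lambda>s. p s - p a) = integral {a..b} p - (b - a) *\<^sub>R p a"
    using ab cont by (subst integral_diff) (auto intro: integrable_continuous_interval)
  then have "norm ((b - a) *\<^sub>R p a - integral {a..b} p) = norm (integral {a..b} (\<lambda>s. p s - p a))"
    by (simp add: norm_minus_commute)
  also have "\<dots> \<le> e * (b - a)"
    using ab cont close by (intro integral_bound) (auto intro!: continuous_intros)
  finally show ?thesis .
qed

lemma integral_eq_sum_cells:
  fixes p :: "real \<Rightarrow> 'b::banach"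
  assumes "continuous_on {0..real n * h} p" and h: "0 \<le> h"
  shows "integral {0..real n * h} p = (\<Sum>k<n. integral {real k * h..real (Suc k) * h} p)"
  using assms(1)
proof (induction n)
  case (Suc n)
  have "real n * h \<le> real (Suc n) * h"
    using h by (intro mult_right_mono) auto
  moreover have "p integrable_on {0..real (Suc n) * h}"
    using Suc.prems by (rule integrable_continuous_interval)
  ultimately have "integral {0..real (Suc n) * h} p
      = integral {0..real n * h} p + integral {real n * h..real (Suc n) * h} p"
    using h by (intro Henstock_Kurzweil_Integration.integral_combine[symmetric]) auto
  moreover have "continuous_on {0..real n * h} p"
    using \<open>real n * h \<le> real (Suc n) * h\<close> by (intro continuous_on_subset[OF Suc.prems]) auto
  ultimately show ?case
    using Suc.IH by simp
qed simp

lemma riemann_sum_tendsto_integral: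
  fixes p :: "real \<Rightarrow> 'b::banach"
  assumes cont: "continuous_on {0..t} p" and t: "0 \<le> t"
  shows "(\<lambda>n. \<Sum>k<n. (t / real n) *\<^sub>R p (real k * t / real n)) \<longlonglongrightarrow> integral {0..t} p"
proof (cases "t = 0")
  case False
  with t have tpos: "t > 0" by simp
  show ?thesis
  proof (rule LIMSEQ_I)
    fix e :: real assume e: "e > 0"
    define e' where "e' = e / (2 * t)"
    have e': "e' > 0" using e tpos by (simp add: e'_def)
    have "uniformly_continuous_on {0..t} p"
      using cont by (simp add: compact_uniformly_continuous)
    then obtain d where d: "d > 0"
      and dd: "\<And>x y. x \<in> {0..t} \<Longrightarrow> y \<in> {0..t} \<Longrightarrow> dist y x < d \<Longrightarrow> dist (p y) (p x) < e'"
      using e' unfolding uniformly_continuous_on_def by metis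
    obtain N :: nat where N: "t / d < real N" using reals_Archimedean2 by blast
    show "\<exists>N. \<forall>n\<ge>N. norm ((\<Sum>k<n. (t / real n) *\<^sub>R p (real k * t / real n)) - integral {0..t} p) < e"
    proof (intro exI allI impI)
      fix n assume nN: "N \<le> n"
      define h where "h = t / real n"
      have tdn: "t < d * real n"
        using N nN d by (simp add: pos_divide_less_eq mult.commute order_less_le_trans)
      then have npos: "real n > 0"
        using tpos by (cases n) auto
      have hd: "h < d" and hpos: "h > 0" and nh: "real n * h = t"
        using tdn npos tpos by (simp_all add: h_def divide_less_eq)
      have cell_err: "norm (h *\<^sub>R p (real k * h) - integral {real k * h..real (Suc k) * h} p) \<le> e' * h"
        if k: "k < n" for k
      proof -
        have in_range: "0 \<le> real k * h" "real (Suc k) * h \<le> t" "real k * h \<le> t"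
          using k nh hpos by (auto simp del: of_nat_Suc intro!: mult_right_mono)
        have "norm ((real (Suc k) * h - real k * h) *\<^sub>R p (real k * h) - integral {real k * h..real (Suc k) * h} p)
            \<le> e' * (real (Suc k) * h - real k * h)"
        proof (rule norm_left_endpoint_integral_le)
          show "continuous_on {real k * h..real (Suc k) * h} p"
            using in_range by (intro continuous_on_subset[OF cont]) auto
          fix s assume s: "s \<in> {real k * h..real (Suc k) * h}"
          then have "s \<in> {0..t}"
            using in_range by (simp only: atLeastAtMost_iff) linarith
          moreover have "dist s (real k * h) < d"
            using s hd by (auto simp: dist_real_def algebra_simps)
          ultimately have "dist (p s) (p (real k * h)) < e'"
            using in_range by (intro dd) auto
          then show "norm (p s - p (real k * h)) \<le> e'"
            by (simp add: dist_norm)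
        qed (use hpos in simp)
        then show ?thesis
          by (simp add: algebra_simps)
      qed
      have "(\<Sum>k<n. (t / real n) *\<^sub>R p (real k * t / real n)) - integral {0..t} p
          = (\<Sum>k<n. h *\<^sub>R p (real k * h) - integral {real k * h..real (Suc k) * h} p)"
        using integral_eq_sum_cells[of n h p] cont nh hpos by (simp add: sum_subtractf h_def)
      also have "norm \<dots> \<le> (\<Sum>k<n. e' * h)"
        by (rule order_trans[OF norm_sum sum_mono]) (use cell_err in auto)
      also have "\<dots> = e' * t" using nh by (simp add: algebra_simps)
      also have "\<dots> < e" using e tpos by (simp add: e'_def)
      finally show "norm ((\<Sum>k<n. (t / real n) *\<^sub>R p (real k * t / real n)) - integral {0..t} p) < e" .
    qed
  qed
qed simp

lemma ceiling_grid_tendsto: "(\<lambda>n. real_of_int \<lceil>s * real (Suc n)\<rceil> / real (Suc n)) \<longlonglongrightarrow> s"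
proof (rule tendsto_sandwich[where f="\<lambda>n. s" and h="\<lambda>n. s + 1 / real (Suc n)"])
  have "s * real (Suc n) \<le> real_of_int \<lceil>s * real (Suc n)\<rceil>"
    and "real_of_int \<lceil>s * real (Suc n)\<rceil> \<le> s * real (Suc n) + 1" for n
    by linarith+
  then show "\<forall>\<^sub>F n in sequentially. s \<le> real_of_int \<lceil>s * real (Suc n)\<rceil> / real (Suc n)"
    and "\<forall>\<^sub>F n in sequentially. real_of_int \<lceil>s * real (Suc n)\<rceil> / real (Suc n) \<le> s + 1 / real (Suc n)"
    by (auto simp: field_simps simp del: of_nat_Suc)
  show "(\<lambda>n. s + 1 / real (Suc n)) \<longlonglongrightarrow> s"
    using tendsto_add[OF tendsto_const LIMSEQ_Suc[OF lim_const_over_n[of 1]], of s] by simp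
qed simp

text \<open>A Caratheodory function (measurable in \<open>\<omega>\<close>, continuous in time) is jointly measurable:
  it is the pointwise limit of its evaluations on the grids \<open>\<lceil>t n\<rceil>/n\<close>.\<close>
lemma borel_measurable_pair_continuous_on:
  fixes f :: "real \<Rightarrow> 'a \<Rightarrow> 'b::metric_space"
  assumes ab: "a \<le> b"
    and meas: "\<And>t. t \<in> {a..b} \<Longrightarrow> f t \<in> borel_measurable M"
    and cont: "\<And>\<omega>. \<omega> \<in> space M \<Longrightarrow> continuous_on {a..b} (\<lambda>t. f t \<omega>)"
  shows "(\<lambda>x. f (max a (min b (fst x))) (snd x)) \<in> borel_measurable (lborel \<Otimes>\<^sub>M M)"
proof (rule borel_measurable_LIMSEQ_metric)
  define cl where "cl s = max a (min b s)" for s :: real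
  have clin: "cl s \<in> {a..b}" for s using ab by (auto simp: cl_def)
  fix n :: nat
  show "(\<lambda>x. f (cl (real_of_int \<lceil>fst x * real (Suc n)\<rceil> / real (Suc n))) (snd x)) \<in> borel_measurable (lborel \<Otimes>\<^sub>M M)"
  proof (rule measurable_compose_countable'[where I=UNIV and g="\<lambda>x. \<lceil>fst x * real (Suc n)\<rceil>"
        and f="\<lambda>i x. f (cl (real_of_int i / real (Suc n))) (snd x)"])
    show "(\<lambda>x. f (cl (real_of_int i / real (Suc n))) (snd x)) \<in> borel_measurable (lborel \<Otimes>\<^sub>M M)" for i
      by (rule measurable_compose[OF measurable_snd meas[OF clin]])
  qed simp_all
next
  fix x :: "real \<times> 'a" assume "x \<in> space (lborel \<Otimes>\<^sub>M M)"
  then have \<omega>: "snd x \<in> space M" by (auto simp: space_pair_measure)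
  have "(\<lambda>n. max a (min b (real_of_int \<lceil>fst x * real (Suc n)\<rceil> / real (Suc n)))) \<longlonglongrightarrow> max a (min b (fst x))"
    by (intro tendsto_intros ceiling_grid_tendsto)
  then show "(\<lambda>n. f (max a (min b (real_of_int \<lceil>fst x * real (Suc n)\<rceil> / real (Suc n)))) (snd x))
      \<longlonglongrightarrow> f (max a (min b (fst x))) (snd x)"
    by (rule continuous_on_tendsto_compose[OF cont[OF \<omega>]]) (use ab in auto)
qed

lemma C_inf_continuous_on: "C_inf f \<Longrightarrow> continuous_on UNIV f"
  by (erule C_inf.cases) simp

lemma C_c_inf_bounded:
  assumes "C_c_inf (f :: 'a::real_normed_vector \<Rightarrow> 'b::real_normed_vector)"
  obtains K where "\<And>x. norm (f x) \<le> K"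
proof -
  define S where "S = closure {x. f x \<noteq> 0}"
  have "compact (f ` S)"
    using assms unfolding C_c_inf_def S_def
    by (auto intro: compact_continuous_image continuous_on_subset[OF C_inf_continuous_on])
  then obtain K where K: "\<forall>y\<in>f ` S. norm y \<le> K"
    using compact_imp_bounded bounded_iff by metis
  have "norm (f x) \<le> max K 0" for x
  proof (cases "f x = 0")
    case False
    then have "x \<in> S" unfolding S_def by (intro closure_subset[THEN subsetD]) simp
    then show ?thesis using K by fastforce
  qed simp
  then show ?thesis
    by (rule that)
qed

lemma sum_offdiag_mono:
  fixes a :: "'i \<Rightarrow> 'i \<Rightarrow> 'b::ordered_comm_monoid_add"
  assumes "finite S" "A \<subseteq> S" "\<And>i j. 0 \<le> a i j"
  shows "(\<Sum>i\<in>A. \<Sum>j\<in>A - {i}. a i j) \<le> (\<Sum>i\<in>S. \<Sum>j\<in>S - {i}. a i j)"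
proof -
  have "(\<Sum>i\<in>A. \<Sum>j\<in>A - {i}. a i j) \<le> (\<Sum>i\<in>A. \<Sum>j\<in>S - {i}. a i j)"
    using assms by (intro sum_mono sum_mono2) auto
  also have "\<dots> \<le> (\<Sum>i\<in>S. \<Sum>j\<in>S - {i}. a i j)"
    using assms by (intro sum_mono2 sum_nonneg) auto
  finally show ?thesis .
qed

lemma sum_offdiag_weighted_le:
  fixes m c :: "'i \<Rightarrow> 'i \<Rightarrow> real" and a :: "'i \<Rightarrow> real"
  assumes S: "finite S" "A \<subseteq> S" and m: "\<And>i j. 0 \<le> m i j" and c: "\<And>i j. 0 \<le> c i j"
    and a: "\<And>i. \<bar>a i\<bar> \<le> K"
  shows "(\<Sum>i\<in>A. \<Sum>j\<in>A - {i}. m i j * \<bar>a i * c i j\<bar>) \<le> K * (\<Sum>i\<in>S. \<Sum>j\<in>S - {i}. m i j * c i j)"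
proof -
  have K: "0 \<le> K"
    using a[of undefined] abs_ge_zero order_trans by blast
  have "m i j * \<bar>a i * c i j\<bar> \<le> K * (m i j * c i j)" for i j
    using mult_left_mono[OF mult_right_mono[OF a c] m] by (simp add: abs_mult c mult_ac)
  then have "(\<Sum>i\<in>A. \<Sum>j\<in>A - {i}. m i j * \<bar>a i * c i j\<bar>) \<le> (\<Sum>i\<in>A. \<Sum>j\<in>A - {i}. K * (m i j * c i j))"
    by (intro sum_mono)
  also have "\<dots> \<le> (\<Sum>i\<in>S. \<Sum>j\<in>S - {i}. K * (m i j * c i j))"
    using K m c by (intro sum_offdiag_mono[OF S]) simp
  finally show ?thesis
    by (simp add: sum_distrib_left)
qed

lemma AE_subset_of_eq_diff:
  assumes "AE \<omega> in M. \<forall>N\<ge>1. \<forall>t\<ge>0. A N t \<omega> = {1..N} - D N t \<omega>" and N: "1 \<le> N"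
  shows "AE \<omega> in M. \<forall>t\<in>{0..T}. A N t \<omega> \<subseteq> {1..N}"
  using assms(1) by (rule eventually_mono) (use N in auto)

lemma measurable_lborel_pair: "measurable (lborel \<Otimes>\<^sub>M lborel) N = measurable (borel \<Otimes>\<^sub>M borel) N"
  by (intro measurable_cong_sets sets_pair_measure_cong) simp_all

section \<open>Mollifiers\<close>

lemma mollif_nonneg: "(\<And>x. 0 \<le> \<theta> x) \<Longrightarrow> 0 < e \<Longrightarrow> 0 \<le> mollif e \<theta> x"
  unfolding mollif_def by simp

lemma borel_measurable_mollif:
  assumes [measurable]: "\<theta> \<in> borel_measurable borel"
  shows "mollif e \<theta> \<in> borel_measurable borel"
  unfolding mollif_def by measurable

lemma continuous_on_mollif:
  assumes "continuous_on UNIV \<theta>"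
  shows "continuous_on UNIV (mollif e \<theta>)"
proof -
  have "continuous_on UNIV (\<lambda>x. \<theta> ((1 / e) *\<^sub>R x))"
    by (rule continuous_on_compose2[OF assms]) (auto intro!: continuous_intros)
  then show ?thesis
    unfolding mollif_def divide_inverse by (rule continuous_on_mult_right)
qed

lemma nn_integral_mollif_translate:
  fixes \<theta> :: "real^'d \<Rightarrow> real"
  assumes \<theta>: "\<theta> \<in> borel_measurable borel" "\<And>x. 0 \<le> \<theta> x" "(\<theta> has_integral 1) UNIV" and e: "0 < e"
  shows "(\<integral>\<^sup>+ x. ennreal (mollif e \<theta> (x + a)) \<partial>lborel) = 1"
proof -
  have [measurable]: "mollif e \<theta> \<in> borel_measurable borel"
    by (rule borel_measurable_mollif[OF \<theta>(1)])
  have "(\<integral>\<^sup>+ x. ennreal (mollif e \<theta> (x + a)) \<partial>lborel)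
      = (\<integral>\<^sup>+ x. ennreal (mollif e \<theta> (x + a))
          \<partial>density (distr lborel borel (\<lambda>x. - a + e *\<^sub>R x)) (\<lambda>_. \<bar>e\<bar> ^ DIM(real^'d)))"
    by (subst lborel_affine[OF e[THEN less_imp_neq, symmetric], of "-a", symmetric]) (rule refl)
  also have "\<dots> = (\<integral>\<^sup>+ x. ennreal (\<bar>e\<bar> ^ CARD('d)) * ennreal (mollif e \<theta> (- a + e *\<^sub>R x + a)) \<partial>lborel)"
    by (simp add: nn_integral_density nn_integral_distr)
  also have "\<dots> = (\<integral>\<^sup>+ x. ennreal (\<theta> x) \<partial>lborel)"
    using e by (intro nn_integral_cong) (simp add: mollif_def ennreal_mult'[symmetric])
  also have "\<dots> = 1"
    using nn_integral_has_integral_lborel[OF \<theta>] by simp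
  finally show ?thesis .
qed

text \<open>Integrating out the position against a bounded, compactly supported density: only the
  velocity variable is confined to \<open>cball 0 R\<close>, each velocity slice contributing mass one.\<close>
lemma nn_integral_density_mollif_le:
  fixes \<theta> :: "real^'d \<Rightarrow> real" and f0 :: "(real^'d) \<times> (real^'d) \<Rightarrow> real"
  assumes \<theta>: "\<theta> \<in> borel_measurable borel" "\<And>x. 0 \<le> \<theta> x" "(\<theta> has_integral 1) UNIV" and e: "0 < e"
    and f0_meas[measurable]: "f0 \<in> borel_measurable borel"
    and f0_bdd: "AE z in lborel. f0 z \<le> \<Gamma>"
    and f0_supp: "AE z in lborel. f0 z \<noteq> 0 \<longrightarrow> norm z \<le> R"
  shows "(\<integral>\<^sup>+ z. ennreal (f0 z) * ennreal (mollif e \<theta> (fst z + t *\<^sub>R snd z + c)) \<partial>lborel)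
     \<le> ennreal \<Gamma> * emeasure lborel (cball (0::real^'d) R)"
proof -
  have [measurable]: "mollif e \<theta> \<in> borel_measurable borel"
    by (rule borel_measurable_mollif[OF \<theta>(1)])
  have [measurable]: "(indicator (cball (0::real^'d) R) :: _ \<Rightarrow> ennreal) \<in> borel_measurable borel"
    by (intro borel_measurable_indicator) simp
  define F where "F z = ennreal \<Gamma> * indicator (cball 0 R) (snd z) * ennreal (mollif e \<theta> (fst z + t *\<^sub>R snd z + c))"
    for z :: "(real^'d) \<times> (real^'d)"
  have "(\<integral>\<^sup>+ z. ennreal (f0 z) * ennreal (mollif e \<theta> (fst z + t *\<^sub>R snd z + c)) \<partial>lborel)
      \<le> (\<integral>\<^sup>+ z. F z \<partial>lborel)"
  proof (rule nn_integral_mono_AE)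
    show "AE z in lborel. ennreal (f0 z) * ennreal (mollif e \<theta> (fst z + t *\<^sub>R snd z + c)) \<le> F z"
      using f0_bdd f0_supp
    proof eventually_elim
      case (elim z)
      show ?case
      proof (cases "f0 z = 0")
        case False
        then have "snd z \<in> cball 0 R" using elim norm_snd_le[of "snd z" "fst z"] by auto
        then show ?thesis using elim by (auto simp: F_def intro!: mult_right_mono ennreal_leI)
      qed (simp add: F_def)
    qed
  qed
  also have "\<dots> = (\<integral>\<^sup>+ v. (\<integral>\<^sup>+ x. F (x, v) \<partial>lborel) \<partial>lborel)"
    unfolding lborel_prod[symmetric]
    by (rule lborel_pair.nn_integral_snd[symmetric]) (simp add: measurable_lborel_pair F_def)
  also have "\<dots> = (\<integral>\<^sup>+ (v::real^'d). ennreal \<Gamma> * indicator (cball 0 R) v \<partial>lborel)"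
  proof (intro nn_integral_cong)
    fix v :: "real^'d"
    have "(\<integral>\<^sup>+ x. F (x, v) \<partial>lborel)
        = ennreal \<Gamma> * indicator (cball 0 R) v * (\<integral>\<^sup>+ x. ennreal (mollif e \<theta> (x + (t *\<^sub>R v + c))) \<partial>lborel)"
      unfolding F_def by (subst nn_integral_cmult[symmetric]) (auto simp: add.assoc)
    then show "(\<integral>\<^sup>+ x. F (x, v) \<partial>lborel) = ennreal \<Gamma> * indicator (cball 0 R) v"
      by (simp add: nn_integral_mollif_translate[OF \<theta> e])
  qed
  also have "\<dots> = ennreal \<Gamma> * emeasure lborel (cball (0::real^'d) R)"
    by (simp add: nn_integral_cmult)
  finally show ?thesis .
qed

section \<open>Independence, Brownian motion and Gaussian tails\<close>

lemma (in prob_space) indep_vars_imp_indep_rv: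
  assumes ind: "indep_vars M' Y I" and ij: "i \<in> I" "j \<in> I" "i \<noteq> j"
  shows "indep_rv M (M' i) (Y i) (M' j) (Y j)"
proof -
  have rv: "\<And>k. k \<in> I \<Longrightarrow> random_variable (M' k) (Y k)"
    and sets: "indep_sets (\<lambda>k. {Y k -` A \<inter> space M | A. A \<in> sets (M' k)}) I"
    using ind unfolding indep_vars_def2 by auto
  have "indep_set {Y i -` A \<inter> space M | A. A \<in> sets (M' i)} {Y j -` A \<inter> space M | A. A \<in> sets (M' j)}"
    unfolding indep_sets2_eq
  proof (intro conjI ballI)
    have "{Y k -` A \<inter> space M | A. A \<in> sets (M' k)} \<subseteq> events" if "k \<in> I" for k
      using rv[OF that] by (auto simp: measurable_sets)
    then show "{Y i -` A \<inter> space M | A. A \<in> sets (M' i)} \<subseteq> events"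
      and "{Y j -` A \<inter> space M | A. A \<in> sets (M' j)} \<subseteq> events"
      using ij by auto
  next
    fix a b
    assume "a \<in> {Y i -` A \<inter> space M | A. A \<in> sets (M' i)}" "b \<in> {Y j -` A \<inter> space M | A. A \<in> sets (M' j)}"
    then have "prob (\<Inter>k\<in>{i, j}. if k = i then a else b) = (\<Prod>k\<in>{i, j}. prob (if k = i then a else b))"
      using ij by (intro indep_setsD[OF sets]) auto
    then show "prob (a \<inter> b) = prob a * prob b"
      using ij by (simp add: Int_commute)
  qed
  then show ?thesis
    using rv ij unfolding indep_rv_def by auto
qed

lemma (in prob_space) indep_rv_distr_pair:
  assumes ind: "indep_rv M MX X MY Y"
  shows "distr M MX X \<Otimes>\<^sub>M distr M MY Y = distr M (MX \<Otimes>\<^sub>M MY) (\<lambda>\<omega>. (X \<omega>, Y \<omega>))"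
proof (rule pair_measure_eqI)
  have X: "X \<in> measurable M MX" and Y: "Y \<in> measurable M MY"
    and prod: "\<And>A B. A \<in> sets MX \<Longrightarrow> B \<in> sets MY \<Longrightarrow>
      prob ((X -` A \<inter> space M) \<inter> (Y -` B \<inter> space M)) = prob (X -` A \<inter> space M) * prob (Y -` B \<inter> space M)"
    using ind unfolding indep_rv_def indep_sets2_eq by blast+
  show "sigma_finite_measure (distr M MX X)" "sigma_finite_measure (distr M MY Y)"
    using X Y by (auto intro: prob_space_imp_sigma_finite prob_space_distr)
  fix A B assume "A \<in> sets (distr M MX X)" "B \<in> sets (distr M MY Y)"
  then have A: "A \<in> sets MX" and B: "B \<in> sets MY" by auto
  have "(\<lambda>\<omega>. (X \<omega>, Y \<omega>)) -` (A \<times> B) \<inter> space M = (X -` A \<inter> space M) \<inter> (Y -` B \<inter> space M)"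
    by auto
  then show "emeasure (distr M MX X) A * emeasure (distr M MY Y) B
      = emeasure (distr M (MX \<Otimes>\<^sub>M MY) (\<lambda>\<omega>. (X \<omega>, Y \<omega>))) (A \<times> B)"
    using A B X Y
    by (simp add: emeasure_distr emeasure_eq_measure prod ennreal_mult[symmetric] measurable_sets)
qed simp

lemma (in prob_space) nn_integral_indep_le:
  assumes ind: "indep_rv M MX X MY Y"
    and F[measurable]: "F \<in> borel_measurable (MX \<Otimes>\<^sub>M MY)" and g[measurable]: "g \<in> borel_measurable MY"
    and bound: "\<And>y. y \<in> space MY \<Longrightarrow> (\<integral>\<^sup>+ \<omega>. F (X \<omega>, y) \<partial>M) \<le> C"
  shows "(\<integral>\<^sup>+ \<omega>. F (X \<omega>, Y \<omega>) * g (Y \<omega>) \<partial>M) \<le> C * (\<integral>\<^sup>+ \<omega>. g (Y \<omega>) \<partial>M)"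
proof -
  have X[measurable]: "X \<in> measurable M MX" and Y[measurable]: "Y \<in> measurable M MY"
    using ind unfolding indep_rv_def by auto
  interpret PX: prob_space "distr M MX X" by (rule prob_space_distr[OF X])
  interpret PY: prob_space "distr M MY Y" by (rule prob_space_distr[OF Y])
  interpret PXY: pair_sigma_finite "distr M MX X" "distr M MY Y" ..
  have "(\<integral>\<^sup>+ \<omega>. F (X \<omega>, Y \<omega>) * g (Y \<omega>) \<partial>M)
      = (\<integral>\<^sup>+ z. F z * g (snd z) \<partial>distr M (MX \<Otimes>\<^sub>M MY) (\<lambda>\<omega>. (X \<omega>, Y \<omega>)))"
    by (subst nn_integral_distr) simp_all
  also have "\<dots> = (\<integral>\<^sup>+ y. (\<integral>\<^sup>+ x. F (x, y) * g y \<partial>distr M MX X) \<partial>distr M MY Y)"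
    unfolding indep_rv_distr_pair[OF ind, symmetric]
    using PXY.nn_integral_snd[of "\<lambda>z. F z * g (snd z)"] by simp
  also have "\<dots> \<le> (\<integral>\<^sup>+ y. C * g y \<partial>distr M MY Y)"
  proof (rule nn_integral_mono)
    fix y assume y: "y \<in> space (distr M MY Y)"
    then have [measurable]: "(\<lambda>x. F (x, y)) \<in> borel_measurable MX"
      by (intro measurable_compose[OF measurable_Pair2' F]) simp
    have "(\<integral>\<^sup>+ x. F (x, y) \<partial>distr M MX X) \<le> C"
      using bound y by (subst nn_integral_distr) simp_all
    then show "(\<integral>\<^sup>+ x. F (x, y) * g y \<partial>distr M MX X) \<le> C * g y"
      by (subst nn_integral_multc) (auto intro: mult_right_mono)
  qed
  also have "\<dots> = C * (\<integral>\<^sup>+ \<omega>. g (Y \<omega>) \<partial>M)"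
    by (simp add: nn_integral_cmult nn_integral_distr)
  finally show ?thesis .
qed

lemma nn_integral_decseq_tendsto_0:
  fixes f :: "nat \<Rightarrow> 'a \<Rightarrow> ennreal"
  assumes dec: "\<And>n x. f (Suc n) x \<le> f n x" and meas: "\<And>n. f n \<in> borel_measurable M"
    and fin: "(\<integral>\<^sup>+ x. f 0 x \<partial>M) < \<infinity>" and lim: "\<And>x. (\<lambda>n. f n x) \<longlonglongrightarrow> 0"
  shows "(\<lambda>n. \<integral>\<^sup>+ x. f n x \<partial>M) \<longlonglongrightarrow> 0"
proof -
  have "decseq f"
    by (intro decseq_SucI le_funI dec)
  then have dec_int: "decseq (\<lambda>n. \<integral>\<^sup>+ x. f n x \<partial>M)"
    by (auto simp: decseq_def intro!: nn_integral_mono dest: le_funD)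
  have "decseq (\<lambda>n. f n x)" for x
    using dec by (intro decseq_SucI)
  then have "(INF n. f n x) = 0" for x
    using LIMSEQ_unique[OF LIMSEQ_INF lim] by blast
  moreover have "(\<integral>\<^sup>+ x. f n x \<partial>M) < \<infinity>" for n
    using dec_int fin by (auto simp: decseq_def intro: le_less_trans)
  ultimately have "(INF n. \<integral>\<^sup>+ x. f n x \<partial>M) = 0"
    using nn_integral_monotone_convergence_INF_decseq[OF \<open>decseq f\<close> meas] by simp
  then show ?thesis
    using LIMSEQ_INF[OF dec_int] by simp
qed

lemma std_BM_D:
  assumes "std_BM M B"
  shows std_BM_measurable: "B t \<in> borel_measurable M"
    and std_BM_0: "\<omega> \<in> space M \<Longrightarrow> B 0 \<omega> = 0"
    and std_BM_continuous_on: "\<omega> \<in> space M \<Longrightarrow> continuous_on {0..} (\<lambda>t. B t \<omega>)"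
    and std_BM_distributed: "0 \<le> s \<Longrightarrow> s < t \<Longrightarrow>
      distributed M lborel (\<lambda>\<omega>. B t \<omega> - B s \<omega>) (\<lambda>x. ennreal (gauss_density (t - s) x))"
  using assms unfolding std_BM_def by auto

text \<open>The total mass of the heat kernel is read off from the law of a Brownian increment.\<close>
lemma (in prob_space) nn_integral_gauss_density:
  fixes B :: "real \<Rightarrow> 'a \<Rightarrow> real^'d"
  assumes "std_BM M B" and t: "0 < t"
  shows "(\<integral>\<^sup>+ (x::real^'d). ennreal (gauss_density t x) \<partial>lborel) = 1"
proof -
  have "distributed M lborel (\<lambda>\<omega>. B t \<omega> - B 0 \<omega>) (\<lambda>x. ennreal (gauss_density t x))"
    using std_BM_distributed[OF assms(1), of 0 t] t by simp
  from distributed_nn_integral[OF this, of "\<lambda>_. 1"] show ?thesis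
    by (simp add: emeasure_space_1)
qed

lemma gauss_tail_tendsto_0:
  assumes "(\<integral>\<^sup>+ (x::real^'d). ennreal (gauss_density t x) \<partial>lborel) < \<infinity>"
  shows "(\<lambda>n. \<integral>\<^sup>+ x\<in>{x::real^'d. real n - R \<le> norm x}. ennreal (gauss_density t x) \<partial>lborel) \<longlonglongrightarrow> 0"
proof (rule nn_integral_decseq_tendsto_0)
  fix x :: "real^'d"
  obtain n0 :: nat where "norm x + R < real n0"
    using reals_Archimedean2 by blast
  then have "\<forall>\<^sub>F n in sequentially. ennreal (gauss_density t x) * indicator {x. real n - R \<le> norm x} x = 0"
    by (intro eventually_sequentiallyI[of n0]) (auto simp: indicator_def)
  then show "(\<lambda>n. ennreal (gauss_density t x) * indicator {x. real n - R \<le> norm x} x) \<longlonglongrightarrow> 0"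
    by (rule tendsto_eventually)
next
  show "(\<integral>\<^sup>+ x. ennreal (gauss_density t x) * indicator {x::real^'d. real 0 - R \<le> norm x} x \<partial>lborel) < \<infinity>"
    by (rule le_less_trans[OF nn_integral_mono assms]) (simp add: indicator_def)
qed (auto simp: gauss_density_def indicator_def)

lemma borel_measurable_gauss_tail[measurable]:
  "(\<lambda>t. \<integral>\<^sup>+ x\<in>{x::real^'d. a \<le> norm x}. ennreal (gauss_density t x) \<partial>lborel) \<in> borel_measurable borel"
proof -
  have "(\<lambda>(t, x::real^'d). ennreal (gauss_density t x) * indicator {x. a \<le> norm x} x)
      \<in> borel_measurable (lborel \<Otimes>\<^sub>M lborel)"
    unfolding measurable_lborel_pair gauss_density_def by measurable
  from lborel.borel_measurable_nn_integral[OF this] show ?thesis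
    by simp
qed

lemma gauss_tail_integral_tendsto_0:
  assumes tot: "\<And>t. 0 < t \<Longrightarrow> (\<integral>\<^sup>+ x. ennreal (gauss_density t (x::real^'d)) \<partial>lborel) = 1"
  shows "(\<lambda>n. \<integral>\<^sup>+ t\<in>{0..T}.
            (\<integral>\<^sup>+ x\<in>{x::real^'d. real n - R \<le> norm x}. ennreal (gauss_density t x) \<partial>lborel) \<partial>lborel) \<longlonglongrightarrow> 0"
proof (rule nn_integral_decseq_tendsto_0)
  let ?G = "\<lambda>n t. \<integral>\<^sup>+ x\<in>{x::real^'d. real n - R \<le> norm x}. ennreal (gauss_density t x) \<partial>lborel"
  have G_le: "?G n t \<le> 1" if "0 < t" for n t
  proof -
    have "?G n t \<le> (\<integral>\<^sup>+ x. ennreal (gauss_density t (x::real^'d)) \<partial>lborel)"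
      by (intro nn_integral_mono) (simp add: indicator_def)
    then show ?thesis using tot[OF that] by simp
  qed
  have G_0: "?G n 0 = 0" for n
    by (simp add: gauss_density_def)
  show "(\<lambda>t. ?G n t * indicator {0..T} t) \<in> borel_measurable lborel" for n
    unfolding measurable_lborel2 by measurable
  show "?G (Suc n) t * indicator {0..T} t \<le> ?G n t * indicator {0..T} t" for n t
    by (intro mult_right_mono nn_integral_mono) (auto simp: indicator_def)
  have "(\<integral>\<^sup>+ t. ?G 0 t * indicator {0..T} t \<partial>lborel) \<le> (\<integral>\<^sup>+ t. indicator {0..T} t \<partial>lborel)"
  proof (intro nn_integral_mono)
    fix t
    show "?G 0 t * indicator {0..T} t \<le> indicator {0..T} t"
      using G_le[of t 0] G_0[of 0] by (cases "0 < t"; cases "t = 0") (auto simp: indicator_def)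
  qed
  then show "(\<integral>\<^sup>+ t. ?G 0 t * indicator {0..T} t \<partial>lborel) < \<infinity>"
    by (auto simp: emeasure_lborel_Icc_eq intro: le_less_trans)
  show "(\<lambda>n. ?G n t * indicator {0..T} t) \<longlonglongrightarrow> 0" for t
  proof (cases "0 < t")
    case True
    then have "(\<lambda>n. ?G n t) \<longlonglongrightarrow> 0"
      using tot[OF True] by (intro gauss_tail_tendsto_0) simp
    then show ?thesis
      by (cases "t \<in> {0..T}") (simp_all add: indicator_def)
  next
    case False
    then have "(\<lambda>n. ?G n t * indicator {0..T} t) = (\<lambda>n. 0)"
      using G_0 by (cases "t = 0") (auto simp: indicator_def)
    then show ?thesis by simp
  qed
qed

section \<open>Particle trajectories\<close>

text \<open>A version of the integral \<open>\<integral>\<^sub>0\<^sup>t p\<close> that is defined for every path and measurable for the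
  product \<sigma>-algebra on paths; on continuous paths it is the integral.\<close>
definition riemann_lim :: "real \<Rightarrow> (real \<Rightarrow> 'b::real_normed_vector) \<Rightarrow> 'b" where
  "riemann_lim t p = lim (\<lambda>n. \<Sum>k<n. (t / real n) *\<^sub>R p (real k * t / real n))"

lemma borel_measurable_riemann_lim[measurable]:
  "(riemann_lim t :: (real \<Rightarrow> 'b::{banach,second_countable_topology}) \<Rightarrow> 'b)
     \<in> borel_measurable (Pi\<^sub>M UNIV (\<lambda>_. borel))"
  unfolding riemann_lim_def by measurable

lemma riemann_lim_eq_integral:
  fixes p :: "real \<Rightarrow> 'b::banach"
  assumes "continuous_on {0..t} p" "0 \<le> t"
  shows "riemann_lim t p = integral {0..t} p"
  unfolding riemann_lim_def by (rule limI[OF riemann_sum_tendsto_integral[OF assms]])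

definition particle_pos :: "real \<Rightarrow> ((real^'d) \<times> (real^'d)) \<times> (real \<Rightarrow> real^'d) \<Rightarrow> real^'d" where
  "particle_pos t y = fst (fst y) + t *\<^sub>R snd (fst y) + riemann_lim t (snd y)"

definition particle_vel :: "real \<Rightarrow> ((real^'d) \<times> (real^'d)) \<times> (real \<Rightarrow> real^'d) \<Rightarrow> real^'d" where
  "particle_vel t y = snd (fst y) + snd y t"

lemma borel_measurable_fst_snd_euclidean[measurable]:
  "(fst :: 'a::euclidean_space \<times> 'b::euclidean_space \<Rightarrow> 'a) \<in> borel_measurable borel"
  "(snd :: 'a::euclidean_space \<times> 'b::euclidean_space \<Rightarrow> 'b) \<in> borel_measurable borel"
  by (intro borel_measurable_continuous_onI continuous_intros)+

lemma borel_measurable_particle_pos[measurable]: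
  "particle_pos t \<in> borel_measurable (borel \<Otimes>\<^sub>M Pi\<^sub>M UNIV (\<lambda>_. borel))"
  unfolding particle_pos_def by measurable

lemma borel_measurable_particle_vel[measurable]:
  "particle_vel t \<in> borel_measurable (borel \<Otimes>\<^sub>M Pi\<^sub>M UNIV (\<lambda>_. borel))"
  unfolding particle_vel_def by measurable

lemma vel_eq_particle_vel: "vel X0 B i t \<omega> = particle_vel t (X0 i \<omega>, \<lambda>s. B i s \<omega>)"
  by (simp add: vel_def particle_vel_def)

lemma pos_eq_particle_pos:
  assumes cont: "continuous_on {0..} (\<lambda>s. B i s \<omega>)" and t: "0 \<le> t"
  shows "pos X0 B i t \<omega> = particle_pos t (X0 i \<omega>, \<lambda>s. B i s \<omega>)"
proof -
  have cont': "continuous_on {0..t} (\<lambda>s. B i s \<omega>)"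
    by (rule continuous_on_subset[OF cont]) auto
  have "integral {0..t} (\<lambda>s. vel X0 B i s \<omega>) = integral {0..t} (\<lambda>s. snd (X0 i \<omega>)) + integral {0..t} (\<lambda>s. B i s \<omega>)"
    unfolding vel_def by (rule integral_add) (use cont' integrable_continuous_interval in auto)
  then show ?thesis
    using t by (simp add: pos_def particle_pos_def riemann_lim_eq_integral[OF cont' t] add.assoc)
qed

lemma pos_eq_initial_pos: "t < 0 \<Longrightarrow> pos X0 B i t \<omega> = fst (X0 i \<omega>)"
  by (simp add: pos_def)

lemma continuous_on_vel:
  assumes "continuous_on {0..} (\<lambda>s. B i s \<omega>)"
  shows "continuous_on {0..T} (\<lambda>t. vel X0 B i t \<omega>)"
  unfolding vel_def by (intro continuous_intros continuous_on_subset[OF assms]) auto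

lemma continuous_on_pos:
  assumes "continuous_on {0..} (\<lambda>s. B i s \<omega>)"
  shows "continuous_on {0..T} (\<lambda>t. pos X0 B i t \<omega>)"
  unfolding pos_def
  by (intro continuous_intros indefinite_integral_continuous_1 integrable_continuous_interval
      continuous_on_vel[of B i \<omega> T X0, OF assms])

section \<open>Collision rates with fast partners\<close>

locale particle_system = prob_space M
  for M :: "'a measure"
    and f0 :: "(real^'d) \<times> (real^'d) \<Rightarrow> real" and \<Gamma> R :: real
    and X0 :: "nat \<Rightarrow> 'a \<Rightarrow> (real^'d) \<times> (real^'d)"
    and B :: "nat \<Rightarrow> real \<Rightarrow> 'a \<Rightarrow> real^'d" +
  assumes f0_meas[measurable]: "f0 \<in> borel_measurable borel"
    and f0_bdd: "AE z in lborel. f0 z \<le> \<Gamma>"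
    and f0_supp: "AE z in lborel. f0 z \<noteq> 0 \<longrightarrow> norm z \<le> R"
    and X0_distr: "distributed M lborel (X0 i) (\<lambda>z. ennreal (f0 z))"
    and B_BM: "std_BM M (B i)"
    and X0_B_indep: "indep_rv M borel (X0 i) (Pi\<^sub>M UNIV (\<lambda>_::real. borel)) (\<lambda>\<omega> t. B i t \<omega>)"
    and particles_indep: "indep_vars (\<lambda>_. borel \<Otimes>\<^sub>M Pi\<^sub>M UNIV (\<lambda>_::real. borel))
                            (\<lambda>i \<omega>. (X0 i \<omega>, \<lambda>t. B i t \<omega>)) UNIV"
begin

lemma particle_measurable[measurable]:
  "(\<lambda>\<omega>. (X0 i \<omega>, \<lambda>t. B i t \<omega>)) \<in> measurable M (borel \<Otimes>\<^sub>M Pi\<^sub>M UNIV (\<lambda>_::real. borel))"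
  using conjunct1[OF particles_indep[unfolded indep_vars_def2]] by simp

lemma X0_measurable[measurable]: "X0 i \<in> borel_measurable M"
  using measurable_fst'[OF particle_measurable] by simp

lemma B_measurable[measurable]: "B i t \<in> borel_measurable M"
  by (rule std_BM_measurable[OF B_BM])

lemma B_continuous_on: "\<omega> \<in> space M \<Longrightarrow> continuous_on {0..} (\<lambda>t. B i t \<omega>)"
  by (rule std_BM_continuous_on[OF B_BM])

lemma vel_measurable[measurable]: "vel X0 B i t \<in> borel_measurable M"
  unfolding vel_def by measurable

lemma pos_measurable[measurable]: "pos X0 B i t \<in> borel_measurable M"
proof (cases "0 \<le> t")
  case True
  have "(\<lambda>\<omega>. particle_pos t (X0 i \<omega>, \<lambda>s. B i s \<omega>)) \<in> borel_measurable M"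
    by measurable
  then show ?thesis
    by (rule measurable_cong[THEN iffD1, rotated]) (simp add: pos_eq_particle_pos[OF B_continuous_on True])
next
  case False
  have "(\<lambda>\<omega>. fst (X0 i \<omega>)) \<in> borel_measurable M"
    by measurable
  then show ?thesis
    by (rule measurable_cong[THEN iffD1, rotated]) (use False in \<open>simp add: pos_eq_initial_pos\<close>)
qed

lemma gauss_density_total: "0 < t \<Longrightarrow> (\<integral>\<^sup>+ (x::real^'d). ennreal (gauss_density t x) \<partial>lborel) = 1"
  by (rule nn_integral_gauss_density[OF B_BM])

lemma nn_integral_mollif_particle_pos_le:
  fixes \<theta> :: "real^'d \<Rightarrow> real"
  assumes \<theta>: "\<theta> \<in> borel_measurable borel" "\<And>x. 0 \<le> \<theta> x" "(\<theta> has_integral 1) UNIV" and e: "0 < e"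
  shows "(\<integral>\<^sup>+ \<omega>. ennreal (mollif e \<theta> (particle_pos t (X0 i \<omega>, \<lambda>s. B i s \<omega>) - c)) \<partial>M)
    \<le> ennreal \<Gamma> * emeasure lborel (cball (0::real^'d) R)"
proof -
  have [measurable]: "mollif e \<theta> \<in> borel_measurable borel"
    by (rule borel_measurable_mollif[OF \<theta>(1)])
  have "(\<integral>\<^sup>+ \<omega>. ennreal (mollif e \<theta> (particle_pos t (X0 i \<omega>, \<lambda>s. B i s \<omega>) - c)) * 1 \<partial>M)
      \<le> ennreal \<Gamma> * emeasure lborel (cball (0::real^'d) R) * (\<integral>\<^sup>+ \<omega>. 1 \<partial>M)"
  proof (rule nn_integral_indep_le[OF X0_B_indep, where F="\<lambda>y. ennreal (mollif e \<theta> (particle_pos t y - c))"])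
    fix p :: "real \<Rightarrow> real^'d"
    have "(\<integral>\<^sup>+ \<omega>. ennreal (mollif e \<theta> (particle_pos t (X0 i \<omega>, p) - c)) \<partial>M)
        = (\<integral>\<^sup>+ z. ennreal (f0 z) * ennreal (mollif e \<theta> (fst z + t *\<^sub>R snd z + (riemann_lim t p - c))) \<partial>lborel)"
      by (subst distributed_nn_integral[OF X0_distr, symmetric]) (simp_all add: particle_pos_def algebra_simps)
    also have "\<dots> \<le> ennreal \<Gamma> * emeasure lborel (cball (0::real^'d) R)"
      by (rule nn_integral_density_mollif_le[OF \<theta> e f0_meas f0_bdd f0_supp])
    finally show "(\<integral>\<^sup>+ \<omega>. ennreal (mollif e \<theta> (particle_pos t (X0 i \<omega>, p) - c)) \<partial>M)
        \<le> ennreal \<Gamma> * emeasure lborel (cball (0::real^'d) R)" .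
  qed simp_all
  then show ?thesis
    by (simp add: emeasure_space_1)
qed

text \<open>The key estimate: by independence, the kernel is integrated in the position of particle \<open>i\<close>
  alone, which costs at most \<open>\<Gamma> |B(0,R)|\<close> whatever the mollification scale.\<close>
lemma nn_integral_mollif_pair_le:
  fixes \<theta> :: "real^'d \<Rightarrow> real" and g :: "real^'d \<Rightarrow> ennreal"
  assumes \<theta>: "\<theta> \<in> borel_measurable borel" "\<And>x. 0 \<le> \<theta> x" "(\<theta> has_integral 1) UNIV" and e: "0 < e"
    and t: "0 \<le> t" and ij: "i \<noteq> j" and g[measurable]: "g \<in> borel_measurable borel"
  shows "(\<integral>\<^sup>+ \<omega>. ennreal (mollif e \<theta> (pos X0 B i t \<omega> - pos X0 B j t \<omega>)) * g (vel X0 B j t \<omega>) \<partial>M)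
    \<le> ennreal \<Gamma> * emeasure lborel (cball (0::real^'d) R) * (\<integral>\<^sup>+ \<omega>. g (vel X0 B j t \<omega>) \<partial>M)"
proof -
  have [measurable]: "mollif e \<theta> \<in> borel_measurable borel"
    by (rule borel_measurable_mollif[OF \<theta>(1)])
  let ?Y = "\<lambda>k \<omega>. (X0 k \<omega>, \<lambda>s. B k s \<omega>)"
  have "(\<integral>\<^sup>+ \<omega>. ennreal (mollif e \<theta> (pos X0 B i t \<omega> - pos X0 B j t \<omega>)) * g (vel X0 B j t \<omega>) \<partial>M)
      = (\<integral>\<^sup>+ \<omega>. ennreal (mollif e \<theta> (particle_pos t (?Y i \<omega>) - particle_pos t (?Y j \<omega>)))
              * g (particle_vel t (?Y j \<omega>)) \<partial>M)"
    using t by (intro nn_integral_cong) (simp add: pos_eq_particle_pos B_continuous_on vel_eq_particle_vel)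
  also have "\<dots> \<le> ennreal \<Gamma> * emeasure lborel (cball (0::real^'d) R) * (\<integral>\<^sup>+ \<omega>. g (particle_vel t (?Y j \<omega>)) \<partial>M)"
  proof -
    let ?F = "\<lambda>z. ennreal (mollif e \<theta> (particle_pos t (fst z) - particle_pos t (snd z)))"
    have "(\<integral>\<^sup>+ \<omega>. ?F (?Y i \<omega>, ?Y j \<omega>) * g (particle_vel t (?Y j \<omega>)) \<partial>M)
        \<le> ennreal \<Gamma> * emeasure lborel (cball (0::real^'d) R) * (\<integral>\<^sup>+ \<omega>. g (particle_vel t (?Y j \<omega>)) \<partial>M)"
    proof (rule nn_integral_indep_le[OF indep_vars_imp_indep_rv[OF particles_indep _ _ ij], where F="?F"])
      fix y :: "((real^'d) \<times> (real^'d)) \<times> (real \<Rightarrow> real^'d)"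
      show "(\<integral>\<^sup>+ \<omega>. ?F (?Y i \<omega>, y) \<partial>M) \<le> ennreal \<Gamma> * emeasure lborel (cball (0::real^'d) R)"
        using nn_integral_mollif_particle_pos_le[OF \<theta> e, of t i "particle_pos t y"] by simp
    qed simp_all
    then show ?thesis by simp
  qed
  finally show ?thesis
    by (simp add: vel_eq_particle_vel)
qed

lemma AE_norm_initial_velocity_le: "AE \<omega> in M. norm (snd (X0 i \<omega>)) \<le> R"
proof -
  define S where "S = {z :: (real^'d) \<times> (real^'d). R < norm z}"
  have [measurable]: "S \<in> sets borel"
    unfolding S_def by measurable
  have "(\<integral>\<^sup>+ \<omega>. indicator S (X0 i \<omega>) \<partial>M) = (\<integral>\<^sup>+ z. ennreal (f0 z) * indicator S z \<partial>lborel)"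
    by (rule distributed_nn_integral[OF X0_distr, symmetric]) simp
  also have "\<dots> = (\<integral>\<^sup>+ (z::(real^'d) \<times> (real^'d)). 0 \<partial>lborel)"
    using f0_supp by (intro nn_integral_cong_AE) (auto simp: S_def indicator_def elim!: eventually_mono)
  finally have "(\<integral>\<^sup>+ \<omega>. indicator S (X0 i \<omega>) \<partial>M) = 0"
    by simp
  moreover have "(\<lambda>\<omega>. indicator S (X0 i \<omega>) :: ennreal) \<in> borel_measurable M"
    by measurable
  ultimately have "AE \<omega> in M. indicator S (X0 i \<omega>) = (0::ennreal)"
    by (simp add: nn_integral_0_iff_AE)
  then show ?thesis
  proof eventually_elim
    case (elim \<omega>)
    have "norm (snd (X0 i \<omega>)) \<le> norm (X0 i \<omega>)"
      using norm_snd_le[of "snd (X0 i \<omega>)" "fst (X0 i \<omega>)"] by simp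
    with elim show ?case
      by (auto simp: S_def indicator_def split: if_splits)
  qed
qed

lemma nn_integral_velocity_tail_le:
  fixes \<psi> :: "real^'d \<Rightarrow> real"
  assumes \<psi>[measurable]: "\<psi> \<in> borel_measurable borel"
    and \<psi>_range: "\<And>v. 0 \<le> \<psi> v \<and> \<psi> v \<le> 1" and \<psi>_one: "\<And>v. v \<in> ball 0 L \<Longrightarrow> \<psi> v = 1"
    and RL: "R < L" and t: "0 \<le> t"
  shows "(\<integral>\<^sup>+ \<omega>. ennreal (1 - \<psi> (vel X0 B j t \<omega>)) \<partial>M)
     \<le> (\<integral>\<^sup>+ x\<in>{x::real^'d. L - R \<le> norm x}. ennreal (gauss_density t x) \<partial>lborel)"
proof -
  define S where "S = {x :: real^'d. L - R \<le> norm x}"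
  have [measurable]: "S \<in> sets borel"
    unfolding S_def by measurable
  text \<open>Since the initial speed is at most \<open>R\<close>, leaving \<open>B(0,L)\<close> needs a Brownian increment of
    size at least \<open>L - R\<close>.\<close>
  have "(\<integral>\<^sup>+ \<omega>. ennreal (1 - \<psi> (vel X0 B j t \<omega>)) \<partial>M) \<le> (\<integral>\<^sup>+ \<omega>. indicator S (B j t \<omega>) \<partial>M)"
    using AE_norm_initial_velocity_le[of j]
  proof (intro nn_integral_mono_AE, eventually_elim)
    case (elim \<omega>)
    show ?case
    proof (cases "norm (vel X0 B j t \<omega>) < L")
      case False
      then have "L \<le> norm (snd (X0 j \<omega>)) + norm (B j t \<omega>)"
        using norm_triangle_ineq[of "snd (X0 j \<omega>)" "B j t \<omega>"] by (simp add: vel_def)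
      then have "B j t \<omega> \<in> S"
        using elim by (simp add: S_def)
      then show ?thesis
        using \<psi>_range by simp
    qed (simp add: \<psi>_one)
  qed
  also have "\<dots> \<le> (\<integral>\<^sup>+ x. ennreal (gauss_density t x) * indicator S x \<partial>lborel)"
  proof (cases "t = 0")
    case True
    then have "(\<integral>\<^sup>+ \<omega>. indicator S (B j t \<omega>) \<partial>M) = 0"
      using RL by (subst nn_integral_0_iff_AE) (auto simp: S_def std_BM_0[OF B_BM])
    then show ?thesis by simp
  next
    case False
    with t have "distributed M lborel (\<lambda>\<omega>. B j t \<omega> - B j 0 \<omega>) (\<lambda>x. ennreal (gauss_density t x))"
      using std_BM_distributed[OF B_BM, of 0 t] by simp
    from distributed_nn_integral[OF this, of "indicator S"]
    show ?thesis
      by (simp add: std_BM_0[OF B_BM] cong: nn_integral_cong)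
  qed
  finally show ?thesis
    by (simp add: S_def)
qed

text \<open>Pairs range over all \<open>N\<close> initial particles, active or not.\<close>
definition fast_partner_rate :: "real \<Rightarrow> (real^'d \<Rightarrow> real) \<Rightarrow> (real^'d \<Rightarrow> real) \<Rightarrow> nat \<Rightarrow> real \<Rightarrow> 'a \<Rightarrow> real"
  where "fast_partner_rate e \<theta> \<psi> N t \<omega> = 1 / (real N)\<^sup>2 * (\<Sum>i\<in>{1..N}. \<Sum>j\<in>{1..N} - {i}.
      mollif e \<theta> (pos X0 B i t \<omega> - pos X0 B j t \<omega>) * (1 - \<psi> (vel X0 B j t \<omega>)))"

lemma nn_integral_fast_partner_pair_le:
  fixes \<theta> \<psi> :: "real^'d \<Rightarrow> real"
  assumes \<theta>: "\<theta> \<in> borel_measurable borel" "\<And>x. 0 \<le> \<theta> x" "(\<theta> has_integral 1) UNIV" and e: "0 < e"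
    and \<psi>: "\<psi> \<in> borel_measurable borel"
    and \<psi>_range: "\<And>v. 0 \<le> \<psi> v \<and> \<psi> v \<le> 1" and \<psi>_one: "\<And>v. v \<in> ball 0 L \<Longrightarrow> \<psi> v = 1"
    and RL: "R < L" and t: "0 \<le> t" and ij: "i \<noteq> j"
  shows "(\<integral>\<^sup>+ \<omega>. ennreal (mollif e \<theta> (pos X0 B i t \<omega> - pos X0 B j t \<omega>) * (1 - \<psi> (vel X0 B j t \<omega>))) \<partial>M)
    \<le> ennreal \<Gamma> * emeasure lborel (cball (0::real^'d) R)
       * (\<integral>\<^sup>+ x\<in>{x::real^'d. L - R \<le> norm x}. ennreal (gauss_density t x) \<partial>lborel)"
proof -
  have "(\<integral>\<^sup>+ \<omega>. ennreal (mollif e \<theta> (pos X0 B i t \<omega> - pos X0 B j t \<omega>) * (1 - \<psi> (vel X0 B j t \<omega>))) \<partial>M)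
      = (\<integral>\<^sup>+ \<omega>. ennreal (mollif e \<theta> (pos X0 B i t \<omega> - pos X0 B j t \<omega>)) * ennreal (1 - \<psi> (vel X0 B j t \<omega>)) \<partial>M)"
    using \<psi>_range by (simp add: ennreal_mult' mollif_nonneg \<theta>(2) e)
  also have "\<dots> \<le> ennreal \<Gamma> * emeasure lborel (cball (0::real^'d) R)
      * (\<integral>\<^sup>+ \<omega>. ennreal (1 - \<psi> (vel X0 B j t \<omega>)) \<partial>M)"
    using \<psi> by (intro nn_integral_mollif_pair_le[OF \<theta> e t ij]) simp
  also have "\<dots> \<le> ennreal \<Gamma> * emeasure lborel (cball (0::real^'d) R)
      * (\<integral>\<^sup>+ x\<in>{x::real^'d. L - R \<le> norm x}. ennreal (gauss_density t x) \<partial>lborel)"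
    by (intro mult_left_mono nn_integral_velocity_tail_le[OF \<psi> \<psi>_range \<psi>_one RL t]) auto
  finally show ?thesis .
qed

lemma ennreal_inverse_square_mult_le: "ennreal (1 / (real N)\<^sup>2) * (of_nat N * of_nat N) \<le> 1"
proof (cases "N = 0")
  case False
  have "(of_nat N * of_nat N :: ennreal) = ennreal ((real N)\<^sup>2)"
    by (simp add: ennreal_of_nat_eq_real_of_nat power2_eq_square ennreal_mult)
  then have "ennreal (1 / (real N)\<^sup>2) * (of_nat N * of_nat N) = ennreal (1 / (real N)\<^sup>2 * (real N)\<^sup>2)"
    using ennreal_mult[of "1 / (real N)\<^sup>2" "(real N)\<^sup>2"] by simp
  then show ?thesis
    using False by simp
qed simp

lemma nn_integral_fast_partner_rate_le:
  fixes \<theta> \<psi> :: "real^'d \<Rightarrow> real"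
  assumes \<theta>: "\<theta> \<in> borel_measurable borel" "\<And>x. 0 \<le> \<theta> x" "(\<theta> has_integral 1) UNIV" and e: "0 < e"
    and \<psi>[measurable]: "\<psi> \<in> borel_measurable borel"
    and \<psi>_range: "\<And>v. 0 \<le> \<psi> v \<and> \<psi> v \<le> 1" and \<psi>_one: "\<And>v. v \<in> ball 0 L \<Longrightarrow> \<psi> v = 1"
    and RL: "R < L" and t: "0 \<le> t"
  shows "(\<integral>\<^sup>+ \<omega>. ennreal (fast_partner_rate e \<theta> \<psi> N t \<omega>) \<partial>M)
    \<le> ennreal \<Gamma> * emeasure lborel (cball (0::real^'d) R)
       * (\<integral>\<^sup>+ x\<in>{x::real^'d. L - R \<le> norm x}. ennreal (gauss_density t x) \<partial>lborel)"
    (is "_ \<le> ?C * ?tail")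
proof -
  have [measurable]: "mollif e \<theta> \<in> borel_measurable borel"
    by (rule borel_measurable_mollif[OF \<theta>(1)])
  define m where "m i j \<omega> = mollif e \<theta> (pos X0 B i t \<omega> - pos X0 B j t \<omega>) * (1 - \<psi> (vel X0 B j t \<omega>))"
    for i j \<omega>
  have m_nonneg: "0 \<le> m i j \<omega>" for i j \<omega>
    using \<psi>_range by (simp add: m_def mollif_nonneg \<theta>(2) e)
  have [measurable]: "(\<lambda>\<omega>. ennreal (m i j \<omega>)) \<in> borel_measurable M" for i j
    unfolding m_def by measurable
  have "ennreal (fast_partner_rate e \<theta> \<psi> N t \<omega>)
      = ennreal (1 / (real N)\<^sup>2) * (\<Sum>i\<in>{1..N}. \<Sum>j\<in>{1..N} - {i}. ennreal (m i j \<omega>))" for \<omega>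
  proof -
    have "ennreal (fast_partner_rate e \<theta> \<psi> N t \<omega>)
        = ennreal (1 / (real N)\<^sup>2) * ennreal (\<Sum>i\<in>{1..N}. \<Sum>j\<in>{1..N} - {i}. m i j \<omega>)"
      unfolding fast_partner_rate_def m_def by (rule ennreal_mult') simp
    also have "ennreal (\<Sum>i\<in>{1..N}. \<Sum>j\<in>{1..N} - {i}. m i j \<omega>)
        = (\<Sum>i\<in>{1..N}. \<Sum>j\<in>{1..N} - {i}. ennreal (m i j \<omega>))"
      using m_nonneg by (simp add: sum_nonneg)
    finally show ?thesis .
  qed
  then have "(\<integral>\<^sup>+ \<omega>. ennreal (fast_partner_rate e \<theta> \<psi> N t \<omega>) \<partial>M)
      = ennreal (1 / (real N)\<^sup>2) * (\<Sum>i\<in>{1..N}. \<Sum>j\<in>{1..N} - {i}. \<integral>\<^sup>+ \<omega>. ennreal (m i j \<omega>) \<partial>M)"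
    by (simp add: nn_integral_cmult nn_integral_sum)
  also have "\<dots> \<le> ennreal (1 / (real N)\<^sup>2) * (\<Sum>i\<in>{1..N}. \<Sum>j\<in>{1..N}. ?C * ?tail)"
    using nn_integral_fast_partner_pair_le[OF \<theta> e \<psi> \<psi>_range \<psi>_one RL t]
    by (intro mult_left_mono sum_mono order_trans[OF sum_mono sum_mono2]) (auto simp: m_def)
  also have "\<dots> = ennreal (1 / (real N)\<^sup>2) * (of_nat N * of_nat N) * (?C * ?tail)"
    by (simp add: mult.assoc)
  also have "\<dots> \<le> ?C * ?tail"
    using mult_right_mono[OF ennreal_inverse_square_mult_le, of "?C * ?tail" N] by simp
  finally show ?thesis .
qed

lemma fast_partner_rate_measurable:
  assumes [measurable]: "\<theta> \<in> borel_measurable borel" "\<psi> \<in> borel_measurable borel"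
  shows "fast_partner_rate e \<theta> \<psi> N t \<in> borel_measurable M"
proof -
  have [measurable]: "mollif e \<theta> \<in> borel_measurable borel"
    by (rule borel_measurable_mollif) measurable
  show ?thesis
    unfolding fast_partner_rate_def by measurable
qed

lemma fast_partner_rate_measurable_pair:
  fixes \<theta> \<psi> :: "real^'d \<Rightarrow> real"
  assumes \<theta>: "continuous_on UNIV \<theta>" and \<psi>: "continuous_on UNIV \<psi>"
  shows "(\<lambda>(t, \<omega>). ennreal (fast_partner_rate e \<theta> \<psi> N t \<omega>) * indicator {0..T} t) \<in> borel_measurable (lborel \<Otimes>\<^sub>M M)"
proof (cases "0 \<le> T")
  case T: True
  have "(\<lambda>x. fast_partner_rate e \<theta> \<psi> N (max 0 (min T (fst x))) (snd x)) \<in> borel_measurable (lborel \<Otimes>\<^sub>M M)"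
  proof (rule borel_measurable_pair_continuous_on[OF T])
    show "fast_partner_rate e \<theta> \<psi> N t \<in> borel_measurable M" for t
      using \<theta> \<psi> by (intro fast_partner_rate_measurable borel_measurable_continuous_onI)
    show "continuous_on {0..T} (\<lambda>t. fast_partner_rate e \<theta> \<psi> N t \<omega>)" if "\<omega> \<in> space M" for \<omega>
      unfolding fast_partner_rate_def
      by (intro continuous_intros continuous_on_compose2[OF continuous_on_mollif[OF \<theta>]]
          continuous_on_compose2[OF \<psi>] continuous_on_pos continuous_on_vel B_continuous_on[OF that]) auto
  qed
  then have "(\<lambda>x. ennreal (fast_partner_rate e \<theta> \<psi> N (max 0 (min T (fst x))) (snd x)) * indicator {0..T} (fst x))
      \<in> borel_measurable (lborel \<Otimes>\<^sub>M M)"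
    by measurable
  then show ?thesis
    by (rule measurable_cong[THEN iffD1, rotated]) (auto simp: indicator_def)
next
  case False
  then have "(\<lambda>(t, \<omega>). ennreal (fast_partner_rate e \<theta> \<psi> N t \<omega>) * indicator {0..T} t) = (\<lambda>_. 0)"
    by (intro ext) (auto simp: indicator_def)
  then show ?thesis
    by simp
qed

lemma nn_integral_time_fast_partner_rate_le:
  fixes \<theta> \<psi> :: "real^'d \<Rightarrow> real"
  assumes \<theta>: "continuous_on UNIV \<theta>" "\<And>x. 0 \<le> \<theta> x" "(\<theta> has_integral 1) UNIV" and e: "0 < e"
    and \<psi>: "continuous_on UNIV \<psi>" "\<And>v. 0 \<le> \<psi> v \<and> \<psi> v \<le> 1" "\<And>v. v \<in> ball 0 L \<Longrightarrow> \<psi> v = 1"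
    and RL: "R < L"
  shows "(\<integral>\<^sup>+ \<omega>. (\<integral>\<^sup>+ t\<in>{0..T}. c * ennreal (fast_partner_rate e \<theta> \<psi> N t \<omega>) \<partial>lborel) \<partial>M)
    \<le> c * (ennreal \<Gamma> * emeasure lborel (cball (0::real^'d) R))
       * (\<integral>\<^sup>+ t\<in>{0..T}. (\<integral>\<^sup>+ x\<in>{x::real^'d. L - R \<le> norm x}. ennreal (gauss_density t x) \<partial>lborel) \<partial>lborel)"
    (is "_ \<le> c * ?C * ?tail")
proof -
  interpret pair_sigma_finite lborel M ..
  let ?rate = "fast_partner_rate e \<theta> \<psi> N"
  have \<theta>_meas: "\<theta> \<in> borel_measurable borel" and \<psi>_meas: "\<psi> \<in> borel_measurable borel"
    using \<theta>(1) \<psi>(1) by (simp_all add: borel_measurable_continuous_onI)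
  have joint: "(\<lambda>(t, \<omega>). c * (ennreal (?rate t \<omega>) * indicator {0..T} t)) \<in> borel_measurable (lborel \<Otimes>\<^sub>M M)"
    using fast_partner_rate_measurable_pair[OF \<theta>(1) \<psi>(1)] by (simp add: split_beta')
  have "(\<lambda>\<omega>. ennreal (?rate t \<omega>)) \<in> borel_measurable M" for t
    using fast_partner_rate_measurable[OF \<theta>_meas \<psi>_meas] by measurable
  with Fubini[OF joint]
  have "(\<integral>\<^sup>+ \<omega>. (\<integral>\<^sup>+ t\<in>{0..T}. c * ennreal (?rate t \<omega>) \<partial>lborel) \<partial>M)
      = (\<integral>\<^sup>+ t\<in>{0..T}. c * (\<integral>\<^sup>+ \<omega>. ennreal (?rate t \<omega>) \<partial>M) \<partial>lborel)"
    by (simp add: nn_integral_cmult nn_integral_multc mult.assoc)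
  also have "\<dots> \<le> (\<integral>\<^sup>+ t. c * ?C * ((\<integral>\<^sup>+ x\<in>{x::real^'d. L - R \<le> norm x}. ennreal (gauss_density t x) \<partial>lborel)
      * indicator {0..T} t) \<partial>lborel)"
  proof (rule nn_integral_mono)
    fix t
    show "c * (\<integral>\<^sup>+ \<omega>. ennreal (?rate t \<omega>) \<partial>M) * indicator {0..T} t
        \<le> c * ?C * ((\<integral>\<^sup>+ x\<in>{x::real^'d. L - R \<le> norm x}. ennreal (gauss_density t x) \<partial>lborel) * indicator {0..T} t)"
      using nn_integral_fast_partner_rate_le[OF \<theta>_meas \<theta>(2,3) e \<psi>_meas \<psi>(2,3) RL, of t N]
      by (auto simp: indicator_def mult.assoc intro!: mult_left_mono)
  qed
  also have "\<dots> = c * ?C * ?tail"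
    by (intro nn_integral_cmult) measurable
  finally show ?thesis .
qed

lemma collision_integrand_le:
  fixes \<theta> \<psi> :: "real^'d \<Rightarrow> real" and \<phi> :: "real \<times> (real^'d) \<times> (real^'d) \<Rightarrow> real"
  assumes \<theta>: "\<And>x. 0 \<le> \<theta> x" and e: "0 < e" and \<phi>: "\<And>z. \<bar>\<phi> z\<bar> \<le> K"
    and \<psi>: "\<And>v. \<psi> v \<le> 1" and A: "A \<subseteq> {1..N}"
  shows "1 / (real N)\<^sup>2 * (\<Sum>i\<in>A. \<Sum>j\<in>A - {i}. mollif e \<theta> (pos X0 B i t \<omega> - pos X0 B j t \<omega>) *
           \<bar>\<phi> (t, pos X0 B i t \<omega>, vel X0 B i t \<omega>) * (1 - \<psi> (vel X0 B j t \<omega>))\<bar>)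
    \<le> K * fast_partner_rate e \<theta> \<psi> N t \<omega>"
proof -
  have "(\<Sum>i\<in>A. \<Sum>j\<in>A - {i}. mollif e \<theta> (pos X0 B i t \<omega> - pos X0 B j t \<omega>) *
           \<bar>\<phi> (t, pos X0 B i t \<omega>, vel X0 B i t \<omega>) * (1 - \<psi> (vel X0 B j t \<omega>))\<bar>)
      \<le> K * (\<Sum>i\<in>{1..N}. \<Sum>j\<in>{1..N} - {i}.
           mollif e \<theta> (pos X0 B i t \<omega> - pos X0 B j t \<omega>) * (1 - \<psi> (vel X0 B j t \<omega>)))"
    by (rule sum_offdiag_weighted_le) (use A \<phi> \<psi> in \<open>auto simp: mollif_nonneg \<theta> e\<close>)
  from mult_left_mono[OF this, of "1 / (real N)\<^sup>2"] show ?thesis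
    by (simp add: fast_partner_rate_def mult.left_commute)
qed

lemma collision_integral_le:
  fixes \<theta> \<psi> :: "real^'d \<Rightarrow> real" and \<phi> :: "real \<times> (real^'d) \<times> (real^'d) \<Rightarrow> real"
    and Act :: "real \<Rightarrow> 'a \<Rightarrow> nat set"
  assumes \<theta>: "continuous_on UNIV \<theta>" "\<And>x. 0 \<le> \<theta> x" "(\<theta> has_integral 1) UNIV" and e: "0 < e"
    and \<phi>: "\<And>z. \<bar>\<phi> z\<bar> \<le> K"
    and \<psi>: "continuous_on UNIV \<psi>" "\<And>v. 0 \<le> \<psi> v \<and> \<psi> v \<le> 1" "\<And>v. v \<in> ball 0 L \<Longrightarrow> \<psi> v = 1"
    and RL: "R < L"
    and Act: "AE \<omega> in M. \<forall>t\<in>{0..T}. Act t \<omega> \<subseteq> {1..N}"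
  shows "(\<integral>\<^sup>+ \<omega>. (\<integral>\<^sup>+ t\<in>{0..T}. ennreal (1 / (real N)\<^sup>2 * (\<Sum>i\<in>Act t \<omega>. \<Sum>j\<in>Act t \<omega> - {i}.
             mollif e \<theta> (pos X0 B i t \<omega> - pos X0 B j t \<omega>) *
             \<bar>\<phi> (t, pos X0 B i t \<omega>, vel X0 B i t \<omega>) * (1 - \<psi> (vel X0 B j t \<omega>))\<bar>)) \<partial>lborel) \<partial>M)
    \<le> ennreal K * (ennreal \<Gamma> * emeasure lborel (cball (0::real^'d) R))
       * (\<integral>\<^sup>+ t\<in>{0..T}. (\<integral>\<^sup>+ x\<in>{x::real^'d. L - R \<le> norm x}. ennreal (gauss_density t x) \<partial>lborel) \<partial>lborel)"
proof -
  have K: "0 \<le> K"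
    using \<phi> abs_ge_zero order_trans by blast
  have "AE \<omega> in M. (\<integral>\<^sup>+ t\<in>{0..T}. ennreal (1 / (real N)\<^sup>2 * (\<Sum>i\<in>Act t \<omega>. \<Sum>j\<in>Act t \<omega> - {i}.
             mollif e \<theta> (pos X0 B i t \<omega> - pos X0 B j t \<omega>) *
             \<bar>\<phi> (t, pos X0 B i t \<omega>, vel X0 B i t \<omega>) * (1 - \<psi> (vel X0 B j t \<omega>))\<bar>)) \<partial>lborel)
      \<le> (\<integral>\<^sup>+ t\<in>{0..T}. ennreal K * ennreal (fast_partner_rate e \<theta> \<psi> N t \<omega>) \<partial>lborel)"
    using Act
  proof eventually_elim
    case (elim \<omega>)
    show ?case
    proof (intro nn_integral_mono)
      fix t
      show "ennreal (1 / (real N)\<^sup>2 * (\<Sum>i\<in>Act t \<omega>. \<Sum>j\<in>Act t \<omega> - {i}.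
             mollif e \<theta> (pos X0 B i t \<omega> - pos X0 B j t \<omega>) *
             \<bar>\<phi> (t, pos X0 B i t \<omega>, vel X0 B i t \<omega>) * (1 - \<psi> (vel X0 B j t \<omega>))\<bar>)) * indicator {0..T} t
          \<le> ennreal K * ennreal (fast_partner_rate e \<theta> \<psi> N t \<omega>) * indicator {0..T} t"
      proof (cases "t \<in> {0..T}")
        case True
        then have "1 / (real N)\<^sup>2 * (\<Sum>i\<in>Act t \<omega>. \<Sum>j\<in>Act t \<omega> - {i}.
             mollif e \<theta> (pos X0 B i t \<omega> - pos X0 B j t \<omega>) *
             \<bar>\<phi> (t, pos X0 B i t \<omega>, vel X0 B i t \<omega>) * (1 - \<psi> (vel X0 B j t \<omega>))\<bar>)
            \<le> K * fast_partner_rate e \<theta> \<psi> N t \<omega>"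
          using elim \<psi>(2) by (intro collision_integrand_le[OF \<theta>(2) e \<phi>]) auto
        then show ?thesis
          using True K by (simp add: ennreal_mult'[symmetric] ennreal_leI)
      qed simp
    qed
  qed
  then show ?thesis
    by (rule order_trans[OF nn_integral_mono_AE
          nn_integral_time_fast_partner_rate_le[OF \<theta> e \<psi> RL]])
qed

end

theorem lemma6p1:
  fixes M :: "'a measure"
    and f0 :: "(real^'d) \<times> (real^'d) \<Rightarrow> real" and \<Gamma> R T :: real
    and \<theta> :: "real^'d \<Rightarrow> real" and \<epsilon> :: "nat \<Rightarrow> real"
    and X0 :: "nat \<Rightarrow> 'a \<Rightarrow> (real^'d) \<times> (real^'d)"
    and B :: "nat \<Rightarrow> real \<Rightarrow> 'a \<Rightarrow> real^'d"
    and E :: "nat \<Rightarrow> nat \<Rightarrow> nat \<Rightarrow> 'a \<Rightarrow> real"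
    and Act :: "nat \<Rightarrow> real \<Rightarrow> 'a \<Rightarrow> nat set"
    and \<phi> :: "real \<times> ((real^'d) \<times> (real^'d)) \<Rightarrow> real"
    and \<psi> :: "nat \<Rightarrow> real^'d \<Rightarrow> real"
  assumes M: "prob_space M"
    \<comment> \<open>initial density\<close>
    and f0_meas: "f0 \<in> borel_measurable borel"
    and f0_nonneg: "\<forall>z. 0 \<le> f0 z"
    and f0_bdd: "AE z in lborel. f0 z \<le> \<Gamma>"
    and f0_supp: "AE z in lborel. f0 z \<noteq> 0 \<longrightarrow> norm z \<le> R"
    \<comment> \<open>interaction kernel\<close>
    and \<theta>_smooth: "C_inf \<theta>"
    and \<theta>_nonneg: "\<forall>x. 0 \<le> \<theta> x"
    and \<theta>_int: "(\<theta> has_integral 1) UNIV"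
    and \<theta>_0: "\<theta> 0 = 0"
    and \<theta>_even: "\<forall>x. \<theta> (- x) = \<theta> x"
    and \<theta>_supp: "\<forall>x. \<theta> x \<noteq> 0 \<longrightarrow> norm x \<le> 1"
    \<comment> \<open>scaling\<close>
    and \<epsilon>_range: "\<forall>N. 0 < \<epsilon> N \<and> \<epsilon> N \<le> 1"
    and \<epsilon>_lim: "\<epsilon> \<longlonglongrightarrow> 0"
    and \<epsilon>_limsup: "limsup (\<lambda>N. ereal (1 / (\<epsilon> N ^ CARD('d) * real N))) \<le> 1"
    \<comment> \<open>i.i.d. initial data, independent Brownian motions\<close>
    and X0_distr: "\<forall>i. distributed M lborel (X0 i) (\<lambda>z. ennreal (f0 z))"
    and B_BM: "\<forall>i. std_BM M (B i)"
    and X0_B_indep: "\<forall>i. indep_rv M borel (X0 i) (Pi\<^sub>M UNIV (\<lambda>_::real. borel)) (\<lambda>\<omega> t. B i t \<omega>)"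
    and particles_indep: "prob_space.indep_vars M (\<lambda>_. borel \<Otimes>\<^sub>M Pi\<^sub>M UNIV (\<lambda>_::real. borel))
                            (\<lambda>i \<omega>. (X0 i \<omega>, \<lambda>t. B i t \<omega>)) UNIV"
    \<comment> \<open>exponential clocks of the jump (annihilation) mechanism of the N-particle system\<close>
    and E_distr: "\<forall>N i j. i < j \<longrightarrow> distributed M lborel (E N i j) (\<lambda>x. ennreal (exponential_density 1 x))"
    and E_indep: "\<forall>N. prob_space.indep_vars M (\<lambda>_. borel) (\<lambda>(i, j). E N i j) {(i, j). i < j}"
    and E_particles_indep: "\<forall>N. indep_rv M
          (Pi\<^sub>M {(i, j). i < j} (\<lambda>_. borel)) (\<lambda>\<omega>. \<lambda>(i, j)\<in>{(i, j). i < j}. E N i j \<omega>)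
          (Pi\<^sub>M UNIV (\<lambda>_. borel \<Otimes>\<^sub>M Pi\<^sub>M UNIV (\<lambda>_::real. borel))) (\<lambda>\<omega> i. (X0 i \<omega>, \<lambda>t. B i t \<omega>))"
    \<comment> \<open>active set of the N-particle system (random time-change construction)\<close>
    and Act_mono: "AE \<omega> in M. \<forall>N i s t. 0 \<le> s \<longrightarrow> s \<le> t \<longrightarrow> i \<in> Act N t \<omega> \<longrightarrow> i \<in> Act N s \<omega>"
    and Act_eq: "AE \<omega> in M. \<forall>N\<ge>1. \<forall>t\<ge>0. Act N t \<omega> = {1..N} -
          {i. \<exists>j\<in>{1..N}. j \<noteq> i \<and>
             ennreal (E N (min i j) (max i j) \<omega>) \<le>
               (\<integral>\<^sup>+ s\<in>{0..t}. ennreal (if i \<in> Act N s \<omega> \<and> j \<in> Act N s \<omega>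
                   then 2 / real N * mollif (\<epsilon> N) \<theta> (pos X0 B i s \<omega> - pos X0 B j s \<omega>) else 0) \<partial>lborel)}"
    \<comment> \<open>test functions\<close>
    and \<phi>_test: "C_c_inf \<phi>"
    and \<psi>_smooth: "\<forall>\<Lambda>. C_c_inf (\<psi> \<Lambda>)"
    and \<psi>_range: "\<forall>\<Lambda> v. 0 \<le> \<psi> \<Lambda> v \<and> \<psi> \<Lambda> v \<le> 1"
    and \<psi>_one: "\<forall>\<Lambda>. \<forall>v\<in>ball 0 (real \<Lambda>). \<psi> \<Lambda> v = 1"
    and \<psi>_zero: "\<forall>\<Lambda>. \<forall>v. v \<notin> ball 0 (2 * real \<Lambda>) \<longrightarrow> \<psi> \<Lambda> v = 0"
  shows "(\<lambda>\<Lambda>. SUP N\<in>{1..}. \<integral>\<^sup>+ \<omega>. (\<integral>\<^sup>+ t\<in>{0..T}.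
           ennreal (1 / (real N)\<^sup>2 * (\<Sum>i\<in>Act N t \<omega>. \<Sum>j\<in>Act N t \<omega> - {i}.
              mollif (\<epsilon> N) \<theta> (pos X0 B i t \<omega> - pos X0 B j t \<omega>) *
              \<bar>\<phi> (t, pos X0 B i t \<omega>, vel X0 B i t \<omega>) * (1 - \<psi> \<Lambda> (vel X0 B j t \<omega>))\<bar>)) \<partial>lborel) \<partial>M)
         \<longlonglongrightarrow> 0"
proof -
  interpret particle_system M f0 \<Gamma> R X0 B
    by (intro particle_system.intro particle_system_axioms.intro)
      (rule M f0_meas f0_bdd f0_supp particles_indep X0_distr[rule_format] B_BM[rule_format]
        X0_B_indep[rule_format])+
  obtain K where K: "\<And>z. norm (\<phi> z) \<le> K"
    using C_c_inf_bounded[OF \<phi>_test] by blast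
  let ?C = "ennreal K * (ennreal \<Gamma> * emeasure lborel (cball (0::real^'d) R))"
  have "?C < \<top>"
    using emeasure_bounded_finite[of "cball (0::real^'d) R"] by (simp add: ennreal_mult_less_top)
  from ennreal_tendsto_cmult[OF this gauss_tail_integral_tendsto_0[OF gauss_density_total]]
  have lim: "(\<lambda>\<Lambda>. ?C * (\<integral>\<^sup>+ t\<in>{0..T}.
      (\<integral>\<^sup>+ x\<in>{x::real^'d. real \<Lambda> - R \<le> norm x}. ennreal (gauss_density t x) \<partial>lborel) \<partial>lborel)) \<longlonglongrightarrow> 0"
    by (simp only: mult_zero_right)
  have large: "\<forall>\<^sub>F \<Lambda> in sequentially. R < real \<Lambda>"
    by (rule eventually_sequentiallyI[of "nat \<lfloor>R\<rfloor> + 1"]) linarith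
  show ?thesis
    by (rule tendsto_sandwich[OF _ eventually_mono[OF large] tendsto_const lim])
      (simp, intro SUP_least collision_integral_le C_inf_continuous_on AE_subset_of_eq_diff[OF Act_eq],
        use \<theta>_smooth \<theta>_nonneg \<theta>_int \<epsilon>_range K \<psi>_smooth \<psi>_range \<psi>_one in \<open>auto simp: C_c_inf_def\<close>)
qed

end
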